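(* If $n\ge 1$ and $k\ge 2$ are integers, then the $k$-Pell graph $\Pi_{n,k}$ is a subgraph of the Fibonacci cube $\Gamma_{(2k-2)n-1}$, i.e. there is an injective map $V(\Pi_{n,k})\to V(\Gamma_{(2k-2)n-1})$ sending adjacent vertices to adjacent vertices.
   Context: For an integer $k\ge 2$, a $k$-Pell string is a finite word over the alphabet $\{0,1,\ldots,k-1,kk\}$, i.e. a word over $\{0,1,\ldots,k\}$ in which every maximal run of the letter $k$ has even length. For $n\ge 0$, the $k$-Pell graph $\Pi_{n,k}$ has as vertices all $k$-Pell strings of length $n$, and two vertices are adjacent if one is obtained from the other either by replacing a single letter $i$ by $i+1$ (or vice versa) for some $i\in\{0,1,\ldots,k-2\}$, or by replacing one factor $(k-1)(k-1)$ by $kk$ (or vice versa), in such a way that the resulting string is again a $k$-Pell string. The Fibonacci cube $\Gamma_m$ is the graph whose vertices are the binary strings of length $m$ with no two consecutive 1s, two vertices being adjacent iff they differ in exactly one coordinate. *)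

theory Defs
  imports Main
begin

(* k-Pell strings: words over {0,...,k-1,kk}, i.e. words over {0..k} whose
   maximal runs of the letter k have even length. *)
inductive pell_string :: "nat \<Rightarrow> nat list \<Rightarrow> bool" for k :: nat where
  Nil: "pell_string k []"
| Low: "i < k \<Longrightarrow> pell_string k w \<Longrightarrow> pell_string k (i # w)"
| KK: "pell_string k w \<Longrightarrow> pell_string k (k # k # w)"

definition pell_vertices :: "nat \<Rightarrow> nat \<Rightarrow> nat list set" where
  "pell_vertices n k = {w. length w = n \<and> pell_string k w}"

definition pell_step :: "nat \<Rightarrow> nat list \<Rightarrow> nat list \<Rightarrow> bool" where
  "pell_step k u v \<longleftrightarrow>
     (\<exists>xs ys i. i \<le> k - 2 \<and> u = xs @ [i] @ ys \<and> v = xs @ [Suc i] @ ys) \<or>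
     (\<exists>xs ys. u = xs @ [k - 1, k - 1] @ ys \<and> v = xs @ [k, k] @ ys)"

definition pell_adj :: "nat \<Rightarrow> nat \<Rightarrow> nat list \<Rightarrow> nat list \<Rightarrow> bool" where
  "pell_adj n k u v \<longleftrightarrow> u \<in> pell_vertices n k \<and> v \<in> pell_vertices n k \<and>
     (pell_step k u v \<or> pell_step k v u)"

definition fib_vertices :: "nat \<Rightarrow> bool list set" where
  "fib_vertices m = {w. length w = m \<and> (\<forall>i. Suc i < m \<longrightarrow> \<not> (w ! i \<and> w ! Suc i))}"

definition fib_adj :: "nat \<Rightarrow> bool list \<Rightarrow> bool list \<Rightarrow> bool" where
  "fib_adj m u v \<longleftrightarrow> u \<in> fib_vertices m \<and> v \<in> fib_vertices m \<and>
     card {i. i < m \<and> u ! i \<noteq> v ! i} = 1"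

end

theory Submission
  imports Defs
begin

text \<open>
  Encode a letter \<open>i < k\<close> by the block \<open>(10)^(k-1-i) (00)^i\<close> of length \<open>2k - 2\<close>, and
  the factor \<open>kk\<close> by the block \<open>01 0^(4k-6)\<close>. Every block ends in 0 and has no factor 11,
  so the code of a \<open>k\<close>-Pell string of length \<open>n\<close> is a Fibonacci string of length \<open>(2k-2)n\<close>
  ending in 0; dropping that final 0 gives a vertex of \<open>\<Gamma>((2k-2)n-1)\<close>. The second bit of a
  block is 1 exactly for the \<open>kk\<close> block, so the code can be parsed block by block and is
  injective. Raising a letter \<open>i\<close> to \<open>i + 1\<close> clears a single 1 of its block, and
  \<open>(k-1)(k-1)\<close>, whose code is \<open>0^(4k-4)\<close>, turns into \<open>kk\<close> by setting its second bit;
  hence adjacent vertices are sent to strings at Hamming distance 1.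
\<close>

definition letter_code :: "nat \<Rightarrow> nat \<Rightarrow> bool list" where
  "letter_code k i = map (\<lambda>j. even j \<and> j < 2 * (k - 1 - i)) [0..<2 * k - 2]"

definition kk_code :: "nat \<Rightarrow> bool list" where
  "kk_code k = map (\<lambda>j. j = 1) [0..<4 * k - 4]"

fun pell_encode :: "nat \<Rightarrow> nat list \<Rightarrow> bool list" where
  "pell_encode k [] = []"
| "pell_encode k [x] = letter_code k x"
| "pell_encode k (x # y # w) =
     (if x = k then kk_code k @ pell_encode k w else letter_code k x @ pell_encode k (y # w))"

lemma length_letter_code [simp]: "length (letter_code k i) = 2 * k - 2"
  by (simp add: letter_code_def)

lemma length_kk_code [simp]: "length (kk_code k) = 4 * k - 4"
  by (simp add: kk_code_def)

lemma pell_encode_Cons_letter: "x \<noteq> k \<Longrightarrow> pell_encode k (x # w) = letter_code k x @ pell_encode k w"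
  by (cases w) auto

lemma pell_encode_append:
  "pell_string k xs \<Longrightarrow> pell_encode k (xs @ ys) = pell_encode k xs @ pell_encode k ys"
  by (induction rule: pell_string.induct) (auto simp: pell_encode_Cons_letter)

lemma length_pell_encode: "pell_string k w \<Longrightarrow> length (pell_encode k w) = (2 * k - 2) * length w"
  by (induction rule: pell_string.induct) (auto simp: pell_encode_Cons_letter)

lemma pell_string_prefix:
  "pell_string k (xs @ x # ys) \<Longrightarrow> x < k \<Longrightarrow> pell_string k xs"
proof (induction "xs @ x # ys" arbitrary: xs rule: pell_string.induct)
  case (Low i w)
  then show ?case
    by (cases xs) (auto intro: pell_string.intros)
next
  case (KK w)
  then obtain xs' where "xs = k # k # xs'"
    by (cases xs; cases "tl xs") auto
  with KK show ?case
    by (auto intro: pell_string.intros)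
qed simp

definition no_consecutive_ones :: "bool list \<Rightarrow> bool" where
  "no_consecutive_ones w \<longleftrightarrow> (\<forall>i. Suc i < length w \<longrightarrow> \<not> (w ! i \<and> w ! Suc i))"

lemma no_consecutive_ones_append:
  assumes "no_consecutive_ones a" "no_consecutive_ones b" "a \<noteq> [] \<Longrightarrow> \<not> last a"
  shows "no_consecutive_ones (a @ b)"
  unfolding no_consecutive_ones_def
proof (intro allI impI)
  fix i assume i: "Suc i < length (a @ b)"
  consider "Suc i < length a" | "Suc i = length a" | "length a \<le> i" by linarith
  then show "\<not> ((a @ b) ! i \<and> (a @ b) ! Suc i)"
  proof cases
    case 1
    then show ?thesis using assms(1) by (auto simp: no_consecutive_ones_def nth_append)
  next
    case 2
    then have "a \<noteq> []" by auto
    with 2 have "a ! i = last a" by (metis diff_Suc_1 last_conv_nth)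
    with 2 \<open>a \<noteq> []\<close> assms(3) show ?thesis by (auto simp: nth_append)
  next
    case 3
    then show ?thesis using assms(2) i by (auto simp: no_consecutive_ones_def nth_append Suc_diff_le)
  qed
qed

lemma no_consecutive_ones_butlast: "no_consecutive_ones w \<Longrightarrow> no_consecutive_ones (butlast w)"
  by (simp add: no_consecutive_ones_def nth_butlast)

lemma no_consecutive_ones_letter_code: "no_consecutive_ones (letter_code k i)"
  by (auto simp: no_consecutive_ones_def letter_code_def)

lemma no_consecutive_ones_kk_code: "no_consecutive_ones (kk_code k)"
  by (auto simp: no_consecutive_ones_def kk_code_def)

lemma last_letter_code: "k \<ge> 2 \<Longrightarrow> \<not> last (letter_code k i)"
  by (auto simp: letter_code_def last_map last_upt)

lemma last_kk_code: "k \<ge> 2 \<Longrightarrow> \<not> last (kk_code k)"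
  by (auto simp: kk_code_def last_map last_upt)

lemma letter_code_ne_Nil: "k \<ge> 2 \<Longrightarrow> letter_code k i \<noteq> []"
  by (simp add: letter_code_def)

lemma kk_code_ne_Nil: "k \<ge> 2 \<Longrightarrow> kk_code k \<noteq> []"
  by (simp add: kk_code_def)

lemma last_pell_encode:
  "pell_string k w \<Longrightarrow> k \<ge> 2 \<Longrightarrow> pell_encode k w \<noteq> [] \<Longrightarrow> \<not> last (pell_encode k w)"
  by (induction rule: pell_string.induct)
    (auto simp: pell_encode_Cons_letter last_append last_letter_code last_kk_code)

lemma no_consecutive_ones_pell_encode:
  "pell_string k w \<Longrightarrow> k \<ge> 2 \<Longrightarrow> no_consecutive_ones (pell_encode k w)"
  by (induction rule: pell_string.induct)
    (auto simp: pell_encode_Cons_letter no_consecutive_ones_def[of "[]"]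
      intro!: no_consecutive_ones_append no_consecutive_ones_letter_code no_consecutive_ones_kk_code
        last_letter_code last_kk_code)

lemma letter_code_inj:
  assumes "letter_code k i = letter_code k j" "i < k" "j < k"
  shows "i = j"
proof (rule ccontr)
  assume "i \<noteq> j"
  define p where "p = 2 * (k - 1 - max i j)"
  have "p < 2 * k - 2" using assms(2,3) \<open>i \<noteq> j\<close> by (auto simp: p_def)
  then have "letter_code k i ! p \<noteq> letter_code k j ! p"
    using assms(2,3) \<open>i \<noteq> j\<close> by (auto simp: letter_code_def p_def max_def)
  with assms(1) show False by simp
qed

lemma letter_code_append_nth_1: "k \<ge> 2 \<Longrightarrow> (letter_code k i @ xs) ! 1 = False"
  by (auto simp: letter_code_def nth_append)

lemma kk_code_append_nth_1: "k \<ge> 2 \<Longrightarrow> (kk_code k @ xs) ! 1 = True"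
  by (auto simp: kk_code_def nth_append)

lemma pell_encode_inj:
  assumes "pell_string k u" "pell_string k v" "k \<ge> 2" "pell_encode k u = pell_encode k v"
  shows "u = v"
  using assms
proof (induction arbitrary: v rule: pell_string.induct)
  case Nil
  then show ?case
    using length_pell_encode[of k v] by simp
next
  case (Low i w)
  note i = Low.hyps(1) and IH = Low.IH and k = Low.prems(2) and eq = Low.prems(3)
  from Low.prems(1) show ?case
  proof cases
    case Nil
    with eq i k show ?thesis
      by (simp add: pell_encode_Cons_letter letter_code_ne_Nil)
  next
    case (Low j w')
    with eq i have "letter_code k i = letter_code k j" "pell_encode k w = pell_encode k w'"
      by (simp_all add: pell_encode_Cons_letter)
    with Low i k IH show ?thesis
      using letter_code_inj by blast
  next
    case (KK w')
    with eq i have "(letter_code k i @ pell_encode k w) ! 1 = (kk_code k @ pell_encode k w') ! 1"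
      by (simp add: pell_encode_Cons_letter)
    with k show ?thesis
      using letter_code_append_nth_1 kk_code_append_nth_1 by metis
  qed
next
  case (KK w)
  note IH = KK.IH and k = KK.prems(2) and eq = KK.prems(3)
  from KK.prems(1) show ?case
  proof cases
    case Nil
    with eq k show ?thesis
      by (simp add: kk_code_ne_Nil)
  next
    case (Low j w')
    with eq have "(kk_code k @ pell_encode k w) ! 1 = (letter_code k j @ pell_encode k w') ! 1"
      by (simp add: pell_encode_Cons_letter)
    with k show ?thesis
      using letter_code_append_nth_1 kk_code_append_nth_1 by metis
  next
    case (KK w')
    with eq k IH show ?thesis
      by simp
  qed
qed

definition diff_positions :: "'a list \<Rightarrow> 'a list \<Rightarrow> nat set" where
  "diff_positions x y = {i. i < length x \<and> x ! i \<noteq> y ! i}"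

lemma diff_positions_commute: "length x = length y \<Longrightarrow> diff_positions x y = diff_positions y x"
  by (auto simp: diff_positions_def)

lemma diff_positions_append_same:
  assumes "length a = length b"
  shows "diff_positions (p @ a @ s) (p @ b @ s) = (+) (length p) ` diff_positions a b"
proof -
  have "i \<in> diff_positions (p @ a @ s) (p @ b @ s) \<longleftrightarrow>
      length p \<le> i \<and> i - length p \<in> diff_positions a b" for i
    using assms by (cases "length p \<le> i") (auto simp: diff_positions_def nth_append)
  then show ?thesis by (force intro: image_eqI[where x = "i - length p" for i])
qed

lemma card_diff_positions_append_same:
  "length a = length b \<Longrightarrow>
    card (diff_positions (p @ a @ s) (p @ b @ s)) = card (diff_positions a b)"
  by (simp add: diff_positions_append_same card_image)

lemma diff_positions_letter_code:
  assumes "Suc i < k"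
  shows "diff_positions (letter_code k i) (letter_code k (Suc i)) = {2 * (k - 2 - i)}"
proof -
  define a where "a = k - 2 - i"
  have a: "k - 1 - i = Suc a" "k - 1 - Suc i = a"
    using assms by (simp_all add: a_def)
  have "diff_positions (letter_code k i) (letter_code k (Suc i)) = {j. j < 2 * k - 2 \<and> j = 2 * a}"
    unfolding diff_positions_def letter_code_def a by (auto elim!: evenE)
  also have "\<dots> = {2 * a}"
    using assms by (auto simp: a_def)
  finally show ?thesis by (simp only: a_def)
qed

lemma letter_code_top: "letter_code k (k - 1) = replicate (2 * k - 2) False"
  by (simp add: letter_code_def map_replicate_const)

lemma diff_positions_kk_code:
  assumes "k \<ge> 2"
  shows "diff_positions (letter_code k (k - 1) @ letter_code k (k - 1)) (kk_code k) = {1}"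
proof -
  have "letter_code k (k - 1) @ letter_code k (k - 1) = replicate (4 * k - 4) False"
    unfolding letter_code_top by (simp flip: replicate_add)
  then show ?thesis
    using assms by (auto simp: diff_positions_def kk_code_def)
qed

lemma card_diff_positions_pell_step:
  assumes "k \<ge> 2" "pell_string k u" "pell_step k u v"
  shows "card (diff_positions (pell_encode k u) (pell_encode k v)) = 1"
  using assms(3) unfolding pell_step_def
proof (elim disjE exE conjE)
  fix xs ys i
  assume "i \<le> k - 2" and u: "u = xs @ [i] @ ys" and v: "v = xs @ [Suc i] @ ys"
  then have "i < k" "Suc i < k"
    using assms(1) by arith+
  with assms(2) u have "pell_string k xs"
    using pell_string_prefix by auto
  with u v \<open>Suc i < k\<close>
  have "pell_encode k u = pell_encode k xs @ letter_code k i @ pell_encode k ys"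
    and "pell_encode k v = pell_encode k xs @ letter_code k (Suc i) @ pell_encode k ys"
    by (simp_all add: pell_encode_append pell_encode_Cons_letter)
  with \<open>Suc i < k\<close> show ?thesis
    by (simp add: card_diff_positions_append_same diff_positions_letter_code)
next
  fix xs ys
  assume u: "u = xs @ [k - 1, k - 1] @ ys" and v: "v = xs @ [k, k] @ ys"
  have "k - 1 < k"
    using assms(1) by simp
  with assms(2) u have "pell_string k xs"
    using pell_string_prefix[of k xs "k - 1" "(k - 1) # ys"] by simp
  with u v \<open>k - 1 < k\<close>
  have encode_u: "pell_encode k u =
      pell_encode k xs @ (letter_code k (k - 1) @ letter_code k (k - 1)) @ pell_encode k ys"
    and encode_v: "pell_encode k v = pell_encode k xs @ kk_code k @ pell_encode k ys"
    by (simp_all add: pell_encode_append pell_encode_Cons_letter)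
  have "card (diff_positions (pell_encode k u) (pell_encode k v)) =
      card (diff_positions (letter_code k (k - 1) @ letter_code k (k - 1)) (kk_code k))"
    unfolding encode_u encode_v by (rule card_diff_positions_append_same) simp
  with diff_positions_kk_code[OF assms(1)] show ?thesis
    by simp
qed

lemma card_diff_positions_pell_adj:
  assumes "k \<ge> 2" "pell_adj n k u v"
  shows "card (diff_positions (pell_encode k u) (pell_encode k v)) = 1"
proof -
  have u: "pell_string k u" "length u = n" and v: "pell_string k v" "length v = n"
    using assms(2) by (auto simp: pell_adj_def pell_vertices_def)
  from assms(2) have "pell_step k u v \<or> pell_step k v u"
    by (simp add: pell_adj_def)
  then show ?thesis
  proof
    assume "pell_step k u v"
    then show ?thesis
      by (rule card_diff_positions_pell_step[OF assms(1) u(1)])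
  next
    assume "pell_step k v u"
    then have "card (diff_positions (pell_encode k v) (pell_encode k u)) = 1"
      by (rule card_diff_positions_pell_step[OF assms(1) v(1)])
    moreover have "length (pell_encode k u) = length (pell_encode k v)"
      using u v by (simp add: length_pell_encode)
    ultimately show ?thesis
      by (simp add: diff_positions_commute)
  qed
qed

lemma fib_vertices_iff: "w \<in> fib_vertices m \<longleftrightarrow> length w = m \<and> no_consecutive_ones w"
  by (auto simp: fib_vertices_def no_consecutive_ones_def)

lemma fib_adj_iff_diff_positions:
  "fib_adj m x y \<longleftrightarrow> x \<in> fib_vertices m \<and> y \<in> fib_vertices m \<and> card (diff_positions x y) = 1"
  by (auto simp: fib_adj_def fib_vertices_def diff_positions_def)

definition pell_to_fib :: "nat \<Rightarrow> nat list \<Rightarrow> bool list" where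
  "pell_to_fib k u = butlast (pell_encode k u)"

lemma pell_encode_eq_snoc:
  assumes "pell_string k u" "u \<noteq> []" "k \<ge> 2"
  shows "pell_encode k u = pell_to_fib k u @ [False]"
proof -
  have "pell_encode k u \<noteq> []"
    using assms length_pell_encode[OF assms(1)] by auto
  with last_pell_encode[OF assms(1,3)] show ?thesis
    unfolding pell_to_fib_def by (metis append_butlast_last_id)
qed

lemma length_pell_to_fib:
  "pell_string k u \<Longrightarrow> length (pell_to_fib k u) = (2 * k - 2) * length u - 1"
  by (simp add: pell_to_fib_def length_pell_encode)

lemma pell_to_fib_in_fib_vertices:
  assumes "u \<in> pell_vertices n k" "k \<ge> 2"
  shows "pell_to_fib k u \<in> fib_vertices ((2 * k - 2) * n - 1)"
proof -
  have u: "pell_string k u" "length u = n"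
    using assms(1) by (simp_all add: pell_vertices_def)
  then have "length (pell_to_fib k u) = (2 * k - 2) * n - 1"
    by (simp add: length_pell_to_fib)
  moreover have "no_consecutive_ones (pell_to_fib k u)"
    unfolding pell_to_fib_def
    by (intro no_consecutive_ones_butlast no_consecutive_ones_pell_encode u(1) assms(2))
  ultimately show ?thesis
    by (simp add: fib_vertices_iff)
qed

lemma inj_on_pell_to_fib:
  assumes "n \<ge> 1" "k \<ge> 2"
  shows "inj_on (pell_to_fib k) (pell_vertices n k)"
proof (rule inj_onI)
  fix u v
  assume "u \<in> pell_vertices n k" "v \<in> pell_vertices n k" and eq: "pell_to_fib k u = pell_to_fib k v"
  with assms(1) have u: "pell_string k u" "u \<noteq> []" and v: "pell_string k v" "v \<noteq> []"
    by (auto simp: pell_vertices_def)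
  with eq have "pell_encode k u = pell_encode k v"
    by (simp add: pell_encode_eq_snoc assms(2))
  with u v assms(2) show "u = v"
    by (simp add: pell_encode_inj)
qed

lemma fib_adj_pell_to_fib:
  assumes "n \<ge> 1" "k \<ge> 2" "pell_adj n k u v"
  shows "fib_adj ((2 * k - 2) * n - 1) (pell_to_fib k u) (pell_to_fib k v)"
proof -
  have u: "pell_string k u" "length u = n" and v: "pell_string k v" "length v = n"
    using assms(3) by (auto simp: pell_adj_def pell_vertices_def)
  have "card (diff_positions (pell_to_fib k u) (pell_to_fib k v)) =
      card (diff_positions (pell_to_fib k u @ [False]) (pell_to_fib k v @ [False]))"
    using card_diff_positions_append_same[of "pell_to_fib k u" "pell_to_fib k v" "[]" "[False]"] u v
    by (simp add: length_pell_to_fib)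
  also have "\<dots> = card (diff_positions (pell_encode k u) (pell_encode k v))"
    using u v assms(1) by (simp add: pell_encode_eq_snoc[OF _ _ assms(2)] flip: length_0_conv)
  also have "\<dots> = 1"
    using assms(2,3) by (rule card_diff_positions_pell_adj)
  finally show ?thesis
    using assms(3) pell_to_fib_in_fib_vertices[OF _ assms(2)]
    unfolding fib_adj_iff_diff_positions pell_adj_def by blast
qed

theorem proposition5p8:
  fixes n k :: nat
  assumes "n \<ge> 1" and "k \<ge> 2"
  shows "\<exists>f. inj_on f (pell_vertices n k) \<and>
           f ` pell_vertices n k \<subseteq> fib_vertices ((2 * k - 2) * n - 1) \<and>
           (\<forall>u v. pell_adj n k u v \<longrightarrow> fib_adj ((2 * k - 2) * n - 1) (f u) (f v))"
proof (intro exI[of _ "pell_to_fib k"] conjI allI impI)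
  show "inj_on (pell_to_fib k) (pell_vertices n k)"
    using assms by (rule inj_on_pell_to_fib)
  show "pell_to_fib k ` pell_vertices n k \<subseteq> fib_vertices ((2 * k - 2) * n - 1)"
    using pell_to_fib_in_fib_vertices assms(2) by blast
  show "fib_adj ((2 * k - 2) * n - 1) (pell_to_fib k u) (pell_to_fib k v)"
    if "pell_adj n k u v" for u v
    using assms that by (rule fib_adj_pell_to_fib)
qed

end
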